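(* If $g\in G$ satisfies $g(x)=x$, then $g=1$. Consequently the map $G\to G(x)$, $g\mapsto g(x)$, is a bijection.
   Context: $\mathbb F$ is a field of characteristic zero and $\mathfrak{sl}_2$ is the Lie algebra of $2\times2$ trace-zero matrices over $\mathbb F$. The equitable basis is $x=\begin{pmatrix}1&0\\0&-1\end{pmatrix}$, $y=\begin{pmatrix}-1&2\\0&1\end{pmatrix}$, $z=\begin{pmatrix}-1&0\\-2&1\end{pmatrix}$. Let $x^*=\begin{pmatrix}1&-1\\1&-1\end{pmatrix}$, $y^*=\begin{pmatrix}0&0\\1&0\end{pmatrix}$, $z^*=\begin{pmatrix}0&-1\\0&0\end{pmatrix}$ (these are nilpotent). $G$ is the subgroup of $\mathrm{Aut}_{\mathbb F}(\mathfrak{sl}_2)$ generated by $\exp(\mathrm{ad}\,x^* )$, $\exp(\mathrm{ad}\,y^* )$ and $\exp(\mathrm{ad}\,z^* )$. $G(x)$ denotes the orbit $\{g(x): g\in G\}$. *)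

theory Defs
  imports "HOL-Analysis.Analysis"
begin

text \<open>2x2 matrices over a field 'a are 'a^2^2; row index i, column index j,
  with the two indices of the numeral type 2 being 1 and 2.\<close>

definition mat2 :: "'a \<Rightarrow> 'a \<Rightarrow> 'a \<Rightarrow> 'a \<Rightarrow> 'a^2^2" where
  "mat2 a b c d = (\<chi> i j. if i = 1 then (if j = 1 then a else b) else (if j = 1 then c else d))"

definition sl2 :: "(('a::field)^2^2) set" where
  "sl2 = {A. trace A = 0}"

definition mat_scale :: "'a::times \<Rightarrow> 'a^2^2 \<Rightarrow> 'a^2^2" where
  "mat_scale c A = (\<chi> i j. c * A$i$j)"

definition ad :: "('a::field)^2^2 \<Rightarrow> 'a^2^2 \<Rightarrow> 'a^2^2" where
  "ad n A = n ** A - A ** n"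

text \<open>Exponential of a nilpotent linear endomorphism f of sl2:
  sum of f^k/k! for k below the nilpotency index of f on sl2,
  taken as a map on sl2 (extensional, undefined outside sl2).\<close>
definition nil_index :: "(('a::field)^2^2 \<Rightarrow> 'a^2^2) \<Rightarrow> nat" where
  "nil_index f = (LEAST m. \<forall>A\<in>sl2. (f ^^ m) A = 0)"

definition exp_nil :: "(('a::field_char_0)^2^2 \<Rightarrow> 'a^2^2) \<Rightarrow> ('a^2^2 \<Rightarrow> 'a^2^2)" where
  "exp_nil f = restrict (\<lambda>A. \<Sum>k<nil_index f. mat_scale (1 / of_nat (fact k)) ((f ^^ k) A)) sl2"

definition eq_x :: "('a::field)^2^2" where "eq_x = mat2 1 0 0 (-1)"
definition xs :: "('a::field)^2^2" where "xs = mat2 1 (-1) 1 (-1)"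
definition ys :: "('a::field)^2^2" where "ys = mat2 0 0 1 0"
definition zs :: "('a::field)^2^2" where "zs = mat2 0 (-1) 0 0"

definition gens :: "(('a::field_char_0)^2^2 \<Rightarrow> 'a^2^2) set" where
  "gens = {exp_nil (ad xs), exp_nil (ad ys), exp_nil (ad zs)}"

text \<open>The subgroup G of Aut(sl2) generated by the three exponentials:
  the smallest set of maps on sl2 containing the identity of sl2 and closed under
  composition with the generators and with their inverses (as maps sl2 -> sl2).\<close>
inductive_set G :: "(('a::field_char_0)^2^2 \<Rightarrow> 'a^2^2) set" where
  G_id: "restrict id sl2 \<in> G"
| G_gen: "g \<in> G \<Longrightarrow> s \<in> gens \<Longrightarrow> compose sl2 s g \<in> G"
| G_inv: "g \<in> G \<Longrightarrow> s \<in> gens \<Longrightarrow> compose sl2 (restrict (inv_into sl2 s) sl2) g \<in> G"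

definition orbit_x :: "(('a::field_char_0)^2^2) set" where
  "orbit_x = (\<lambda>g. g eq_x) ` G"

end

theory Submission
  imports Defs
begin

(* Each generator exp(ad n) with n nilpotent equals conjugation
   A |-> P A P^-1 by an integer matrix P of determinant 1 (for x*, y*, z*
   these are [[2,-1],[1,0]], [[1,0],[1,1]] and [[1,-1],[0,1]]).  Conjugations
   by SL_2(Z) are closed under composition and inversion, so by induction
   every element of G is such a conjugation.  A conjugation by P in SL_2(Z)
   fixes x = diag(1,-1) only if P = +-1 (here characteristic zero is used to
   cancel the factor 2 in the entries of P x P^-1), hence it is the identity.
   Composing with an inverse, two such conjugations agreeing at x agree
   everywhere, so the orbit map g |-> g(x) is injective on G; bijectivity onto
   G(x) is then immediate, and the stabiliser statement follows because the
   identity lies in G. *)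

lemma mat2_cases: "(A::'a^2^2) = mat2 (A$1$1) (A$1$2) (A$2$1) (A$2$2)"
  unfolding mat2_def vec_eq_iff forall_2 by simp

lemma mat2_eq: "mat2 a b c d = mat2 a' b' c' d' \<longleftrightarrow> a = a' \<and> b = b' \<and> c = c' \<and> d = d'"
  unfolding vec_eq_iff forall_2 mat2_def by auto

lemma mat2_mult: "mat2 a b c d ** mat2 e f g h =
   mat2 (a*e+b*g) (a*f+b*h) (c*e+d*g) (c*f+(d::'a::semiring_1)*h)"
  unfolding matrix_matrix_mult_def vec_eq_iff forall_2
  by (simp add: sum_2 mat2_def)

lemma mat2_add: "mat2 a b c d + mat2 e f g h = mat2 (a+e) (b+f) (c+g) (d+(h::'a::plus))"
  unfolding vec_eq_iff forall_2 mat2_def by simp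

lemma mat2_diff: "mat2 a b c d - mat2 e f g h = mat2 (a-e) (b-f) (c-g) (d-(h::'a::minus))"
  unfolding vec_eq_iff forall_2 mat2_def by simp

lemma mat2_scale: "mat_scale k (mat2 a b c d) = mat2 (k*a) (k*b) (k*c) (k*(d::'a::times))"
  unfolding vec_eq_iff forall_2 mat2_def mat_scale_def by simp

lemma mat2_zero: "(0::'a::zero^2^2) = mat2 0 0 0 0"
  unfolding vec_eq_iff forall_2 mat2_def by simp

lemma trace_mat2: "trace (mat2 a b c (d::'a::semiring_1)) = a + d"
  unfolding trace_def by (simp add: sum_2 mat2_def)

lemmas mat2_simps = mat2_mult mat2_add mat2_diff mat2_scale mat2_zero mat2_eq

definition Mat :: "int \<Rightarrow> int \<Rightarrow> int \<Rightarrow> int \<Rightarrow> ('a::field_char_0)^2^2" where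
  "Mat a b c d = mat2 (of_int a) (of_int b) (of_int c) (of_int d)"

text \<open>Conjugation by P = Mat a b c d; for det P = 1 the adjugate Mat d (-b) (-c) a is P^-1.\<close>
definition Conj :: "int \<Rightarrow> int \<Rightarrow> int \<Rightarrow> int \<Rightarrow> ('a::field_char_0)^2^2 \<Rightarrow> 'a^2^2" where
  "Conj a b c d A = Mat a b c d ** A ** Mat d (-b) (-c) a"

lemma Mat_mult: "Mat a b c d ** Mat e f g h = Mat (a*e+b*g) (a*f+b*h) (c*e+d*g) (c*f+d*h)"
  by (simp add: Mat_def mat2_mult)

lemma Conj_comp:
  "Conj a b c d (Conj e f g h A) = Conj (a*e+b*g) (a*f+b*h) (c*e+d*g) (c*f+d*h) A"
proof -
  have "Conj a b c d (Conj e f g h A)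
        = (Mat a b c d ** Mat e f g h) ** A ** (Mat h (-f) (-g) e ** Mat d (-b) (-c) a)"
    unfolding Conj_def by (simp add: matrix_mul_assoc)
  then show ?thesis
    unfolding Conj_def Mat_mult by (simp add: algebra_simps)
qed

lemma Conj_one: "Conj 1 0 0 1 A = A"
proof -
  have "Mat 1 0 0 1 = (mat 1 :: 'a^2^2)"
    unfolding Mat_def mat2_def vec_eq_iff forall_2 mat_def by simp
  then show ?thesis unfolding Conj_def by (simp add: matrix_mul_lid matrix_mul_rid)
qed

lemma Conj_inv:
  assumes "a*d - b*c = 1"
  shows "Conj d (-b) (-c) a (Conj a b c d A) = A"
  using Conj_comp[of d "-b" "-c" a a b c d A] assms
  by (simp add: algebra_simps Conj_one)

lemma Conj_inv':
  assumes "a*d - b*c = 1"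
  shows "Conj a b c d (Conj d (-b) (-c) a A) = A"
proof -
  have "d*a - (-b)*(-c) = 1" using assms by (simp add: algebra_simps)
  from Conj_inv[OF this, of A] show ?thesis by simp
qed

text \<open>SL_2(Z)-conjugation preserves the trace, hence maps sl2 into itself.\<close>
lemma Conj_sl2:
  assumes "A \<in> sl2" and "a*d - b*c = 1"
  shows "Conj a b c d A \<in> sl2"
proof -
  obtain p q r s where A: "A = mat2 p q r s" using mat2_cases by blast
  have "p + s = 0" using assms(1) by (simp add: sl2_def A trace_mat2)
  moreover have "(of_int a * of_int d - of_int b * of_int c :: 'a) = 1"
    using assms(2) by (metis of_int_1 of_int_diff of_int_mult)
  moreover have "trace (Conj a b c d A) = (of_int a * of_int d - of_int b * of_int c) * (p + s)"
    unfolding Conj_def Mat_def A by (simp add: mat2_mult trace_mat2 algebra_simps)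
  ultimately show ?thesis by (simp add: sl2_def)
qed

lemma funpow_fixes_zero:
  fixes f :: "'a::zero \<Rightarrow> 'a"
  shows "f 0 = 0 \<Longrightarrow> (f ^^ k) 0 = 0"
  by (induction k) auto

text \<open>If f^3 = 0 then exp f is the truncated series 1 + f + f^2/2 (on sl2):
  the nilpotency index is at most 3 and the missing terms vanish.\<close>
lemma exp_nil_cube_zero:
  fixes f :: "('a::field_char_0)^2^2 \<Rightarrow> 'a^2^2"
  assumes cube: "\<And>A. f (f (f A)) = 0" and zero: "f 0 = 0"
  shows "exp_nil f = restrict (\<lambda>A. A + f A + mat_scale (1/2) (f (f A))) sl2"
proof -
  have P3: "\<forall>A\<in>sl2. (f ^^ 3) A = 0" by (simp add: numeral_3_eq_3 cube)
  define m where "m = nil_index f"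
  have m3: "m \<le> 3" unfolding m_def nil_index_def by (rule Least_le) (rule P3)
  have Pm: "\<forall>A\<in>sl2. (f ^^ m) A = 0" unfolding m_def nil_index_def by (rule LeastI) (rule P3)
  have vanish: "(f ^^ k) A = 0" if "A \<in> sl2" "m \<le> k" for k A
  proof -
    have "(f ^^ k) A = (f ^^ (k-m)) ((f ^^ m) A)"
      using that by (metis funpow_add le_add_diff_inverse2 o_apply)
    then show ?thesis using Pm that by (simp add: funpow_fixes_zero[of f, OF zero])
  qed
  have scale0: "mat_scale t (0::'a^2^2) = 0" for t
    unfolding mat_scale_def vec_eq_iff by simp
  have scale1: "mat_scale 1 (A::'a^2^2) = A" for A
    unfolding mat_scale_def vec_eq_iff by simp
  have "(\<Sum>k<m. mat_scale (1 / of_nat (fact k)) ((f ^^ k) A)) =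
        (\<Sum>k<3. mat_scale (1 / of_nat (fact k)) ((f ^^ k) A))" if "A \<in> sl2" for A
    using m3 by (intro sum.mono_neutral_left) (auto simp: vanish[OF that] scale0)
  then show ?thesis
    unfolding exp_nil_def m_def[symmetric]
    by (intro restrict_ext) (simp add: numeral_3_eq_3 scale1 add.assoc)
qed

lemma exp_ad_eq_Conj:
  fixes n :: "('a::field_char_0)^2^2"
  assumes "\<And>A. ad n (ad n (ad n A)) = 0"
    and "\<And>A. A + ad n A + mat_scale (1/2) (ad n (ad n A)) = Conj a b c d A"
  shows "exp_nil (ad n) = restrict (Conj a b c d) sl2"
proof -
  have zero: "ad n 0 = 0" by (simp add: ad_def)
  show ?thesis
    unfolding exp_nil_cube_zero[of "ad n", OF assms(1) zero] assms(2) by (rule refl)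
qed

lemma exp_ad_xs: "exp_nil (ad xs) = restrict (Conj 2 (-1) 1 0) (sl2 :: (('a::field_char_0)^2^2) set)"
proof (rule exp_ad_eq_Conj)
  fix A :: "'a^2^2"
  obtain p q r s where A: "A = mat2 p q r s" using mat2_cases by blast
  show "ad xs (ad xs (ad xs A)) = 0"
    unfolding A ad_def xs_def by (simp add: mat2_simps algebra_simps)
  show "A + ad xs A + mat_scale (1/2) (ad xs (ad xs A)) = Conj 2 (-1) 1 0 A"
    unfolding A ad_def xs_def Conj_def Mat_def by (simp add: mat2_simps algebra_simps)
qed

lemma exp_ad_ys: "exp_nil (ad ys) = restrict (Conj 1 0 1 1) (sl2 :: (('a::field_char_0)^2^2) set)"
proof (rule exp_ad_eq_Conj)
  fix A :: "'a^2^2"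
  obtain p q r s where A: "A = mat2 p q r s" using mat2_cases by blast
  show "ad ys (ad ys (ad ys A)) = 0"
    unfolding A ad_def ys_def by (simp add: mat2_simps algebra_simps)
  show "A + ad ys A + mat_scale (1/2) (ad ys (ad ys A)) = Conj 1 0 1 1 A"
    unfolding A ad_def ys_def Conj_def Mat_def by (simp add: mat2_simps algebra_simps)
qed

lemma exp_ad_zs: "exp_nil (ad zs) = restrict (Conj 1 (-1) 0 1) (sl2 :: (('a::field_char_0)^2^2) set)"
proof (rule exp_ad_eq_Conj)
  fix A :: "'a^2^2"
  obtain p q r s where A: "A = mat2 p q r s" using mat2_cases by blast
  show "ad zs (ad zs (ad zs A)) = 0"
    unfolding A ad_def zs_def by (simp add: mat2_simps algebra_simps)
  show "A + ad zs A + mat_scale (1/2) (ad zs (ad zs A)) = Conj 1 (-1) 0 1 A"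
    unfolding A ad_def zs_def Conj_def Mat_def by (simp add: mat2_simps algebra_simps)
qed

definition SL2Z_conj :: "(('a::field_char_0)^2^2 \<Rightarrow> 'a^2^2) \<Rightarrow> bool" where
  "SL2Z_conj g \<longleftrightarrow> (\<exists>a b c d. a*d - b*c = 1 \<and> g = restrict (Conj a b c d) sl2)"

lemma SL2Z_conjI: "a*d - b*c = 1 \<Longrightarrow> SL2Z_conj (restrict (Conj a b c d) sl2)"
  unfolding SL2Z_conj_def by blast

lemma SL2Z_conj_id: "SL2Z_conj (restrict id sl2)"
proof -
  have "restrict id sl2 = restrict (Conj 1 0 0 1) (sl2::('a^2^2) set)"
    by (intro restrict_ext) (simp add: Conj_one)
  then show ?thesis using SL2Z_conjI[of 1 1 0 0] by simp
qed

text \<open>Closure under composition: the determinant is multiplicative.\<close>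
lemma SL2Z_conj_compose:
  assumes "SL2Z_conj s" and "SL2Z_conj g"
  shows "SL2Z_conj (compose sl2 s g)"
proof -
  obtain a b c d where s: "a*d - b*c = 1" "s = restrict (Conj a b c d) sl2"
    using assms(1) unfolding SL2Z_conj_def by blast
  obtain e f k h where g: "e*h - f*k = 1" "g = restrict (Conj e f k h) sl2"
    using assms(2) unfolding SL2Z_conj_def by blast
  have "compose sl2 s g = restrict (Conj (a*e+b*k) (a*f+b*h) (c*e+d*k) (c*f+d*h)) sl2"
    unfolding s(2) g(2) compose_def using Conj_sl2[OF _ g(1)]
    by (intro restrict_ext) (auto simp: Conj_comp)
  moreover have "(a*e+b*k)*(c*f+d*h) - (a*f+b*h)*(c*e+d*k) = (a*d-b*c)*(e*h-f*k)"
    by (simp add: algebra_simps)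
  ultimately show ?thesis using s(1) g(1) by (simp add: SL2Z_conjI)
qed

lemma SL2Z_conj_inv:
  assumes "SL2Z_conj s"
  shows "SL2Z_conj (restrict (inv_into sl2 s) sl2)"
proof -
  obtain a b c d where det: "a*d - b*c = 1" and s: "s = restrict (Conj a b c d) sl2"
    using assms unfolding SL2Z_conj_def by blast
  have det': "d*a - (-b)*(-c) = 1" using det by (simp add: algebra_simps)
  have inj: "inj_on s sl2"
    unfolding s by (rule inj_on_inverseI[where g = "Conj d (-b) (-c) a"]) (simp add: Conj_inv[OF det])
  have "inv_into sl2 s y = Conj d (-b) (-c) a y" if "y \<in> sl2" for y
    by (rule inv_into_f_eq[OF inj]) (simp_all add: s Conj_sl2[OF that det'] Conj_inv'[OF det])
  then have "restrict (inv_into sl2 s) sl2 = restrict (Conj d (-b) (-c) a) sl2"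
    by (intro restrict_ext) simp
  then show ?thesis using SL2Z_conjI[OF det'] by simp
qed

lemma SL2Z_conj_gens: "s \<in> gens \<Longrightarrow> SL2Z_conj s"
  unfolding gens_def by (auto simp: exp_ad_xs exp_ad_ys exp_ad_zs intro!: SL2Z_conjI)

lemma G_SL2Z_conj: "g \<in> G \<Longrightarrow> SL2Z_conj g"
  by (induction rule: G.induct)
     (blast intro: SL2Z_conj_id SL2Z_conj_compose SL2Z_conj_inv SL2Z_conj_gens)+

text \<open>Conj_P(x) = x forces P = +-1: the diagonal gives ad + bc = 1, the
  off-diagonal entries give 2ab = 2cd = 0, which in characteristic zero
  means ab = cd = 0; with ad - bc = 1 this leaves a = d = +-1, b = c = 0.\<close>
lemma Conj_fixing_x:
  assumes det: "a*d - b*c = 1" and fix_x: "Conj a b c d (eq_x::('a::field_char_0)^2^2) = eq_x"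
  shows "Conj a b c d (A::'a^2^2) = A"
proof -
  have "(Conj a b c d eq_x :: 'a^2^2) =
        mat2 (of_int (a*d+b*c)) (of_int (-2*a*b)) (of_int (2*c*d)) (of_int (-(a*d+b*c)))"
    unfolding Conj_def Mat_def eq_x_def by (simp add: mat2_mult mat2_eq algebra_simps)
  with fix_x have "mat2 (of_int (a*d+b*c)) (of_int (-2*a*b)) (of_int (2*c*d)) (of_int (-(a*d+b*c)))
                   = (mat2 1 0 0 (-1) :: 'a^2^2)"
    by (simp add: eq_x_def)
  then have "(of_int (a*d+b*c) :: 'a) = 1" "(of_int (-2*a*b) :: 'a) = 0" "(of_int (2*c*d) :: 'a) = 0"
    unfolding mat2_eq by auto
  then have "a*d + b*c = 1" "a*b = 0" "c*d = 0"
    unfolding of_int_eq_1_iff of_int_eq_0_iff by simp_all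
  with det have "a*d = 1" "a*b = 0" "c*d = 0" by linarith+
  then have "(a = 1 \<and> d = 1 \<or> a = -1 \<and> d = -1) \<and> b = 0 \<and> c = 0"
    by (auto simp: zmult_eq_1_iff)
  moreover obtain p q r s where A: "A = mat2 p q r s" using mat2_cases by blast
  ultimately show ?thesis
    unfolding A Conj_def Mat_def by (auto simp: mat2_mult)
qed

text \<open>Two SL_2(Z)-conjugations agreeing at x are equal: conjugation by
  adj(Q) P fixes x, hence is trivial.\<close>
lemma Conj_determined_by_x:
  assumes detP: "a*d - b*c = 1" and detQ: "e*h - f*k = 1"
    and at_x: "Conj a b c d eq_x = (Conj e f k h eq_x :: ('a::field_char_0)^2^2)"
  shows "Conj a b c d A = (Conj e f k h A :: 'a^2^2)"
proof -
  define R :: "'a^2^2 \<Rightarrow> 'a^2^2" where "R = Conj (h*a-f*c) (h*b-f*d) (e*c-k*a) (e*d-k*b)"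
  have R: "R B = Conj h (-f) (-k) e (Conj a b c d B)" for B :: "'a^2^2"
    unfolding R_def Conj_comp by (simp add: algebra_simps)
  have detR: "(h*a-f*c)*(e*d-k*b) - (h*b-f*d)*(e*c-k*a) = 1"
    using detP detQ by (simp add: algebra_simps)
  have "R eq_x = Conj h (-f) (-k) e (Conj e f k h eq_x)"
    by (simp add: R at_x)
  also have "\<dots> = eq_x" by (rule Conj_inv[OF detQ])
  finally have R_id: "R B = B" for B
    unfolding R_def by (rule Conj_fixing_x[OF detR])
  have "Conj a b c d A = Conj e f k h (Conj h (-f) (-k) e (Conj a b c d A))"
    by (rule Conj_inv'[OF detQ, symmetric])
  also have "\<dots> = Conj e f k h A"
    by (simp flip: R add: R_id)
  finally show ?thesis .
qed

lemma eq_x_sl2: "eq_x \<in> sl2"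
  by (simp add: sl2_def eq_x_def trace_mat2)

lemma orbit_map_inj: "inj_on (\<lambda>g. g eq_x) (G :: (('a::field_char_0)^2^2 \<Rightarrow> 'a^2^2) set)"
proof (rule inj_onI)
  fix g1 g2 :: "'a^2^2 \<Rightarrow> 'a^2^2"
  assume "g1 \<in> G" "g2 \<in> G" and at_x: "g1 eq_x = g2 eq_x"
  obtain a b c d where 1: "a*d - b*c = 1" "g1 = restrict (Conj a b c d) sl2"
    using G_SL2Z_conj[OF \<open>g1 \<in> G\<close>] unfolding SL2Z_conj_def by blast
  obtain e f k h where 2: "e*h - f*k = 1" "g2 = restrict (Conj e f k h) sl2"
    using G_SL2Z_conj[OF \<open>g2 \<in> G\<close>] unfolding SL2Z_conj_def by blast
  have "Conj a b c d eq_x = (Conj e f k h eq_x :: 'a^2^2)"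
    using at_x unfolding 1(2) 2(2) by (simp add: eq_x_sl2)
  then show "g1 = g2"
    unfolding 1(2) 2(2) by (intro restrict_ext) (rule Conj_determined_by_x[OF 1(1) 2(1)])
qed

theorem lemma4p1:
  shows "(\<forall>g\<in>(G :: (('a::field_char_0)^2^2 \<Rightarrow> 'a^2^2) set). g eq_x = eq_x \<longrightarrow> g = restrict id sl2)
         \<and> bij_betw (\<lambda>g. g eq_x) (G :: (('a::field_char_0)^2^2 \<Rightarrow> 'a^2^2) set) orbit_x"
proof
  have id_in_G: "restrict id sl2 \<in> (G :: (('a::field_char_0)^2^2 \<Rightarrow> 'a^2^2) set)"
    by (rule G_id)
  have "restrict id sl2 eq_x = (eq_x :: 'a^2^2)"
    by (simp add: eq_x_sl2)
  then show "\<forall>g\<in>(G :: (('a::field_char_0)^2^2 \<Rightarrow> 'a^2^2) set). g eq_x = eq_x \<longrightarrow> g = restrict id sl2"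
    using inj_onD[OF orbit_map_inj _ _ id_in_G] by metis
  show "bij_betw (\<lambda>g. g eq_x) (G :: (('a::field_char_0)^2^2 \<Rightarrow> 'a^2^2) set) orbit_x"
    unfolding bij_betw_def orbit_x_def using orbit_map_inj by simp
qed

end
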